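(* There exists an absolute constant $C_1$ such that the following holds. Let $\mu=\sum_{\ell=1}^k\alpha_\ell\mu_\ell$ with each $\mu_\ell$ a $c$-isoperimetric probability measure on $\mathbb R^d$, $\alpha_\ell\ge0$, $\sum_\ell\alpha_\ell=1$. Generate data as follows: $\ell_1,\dots,\ell_n\in[k]$ i.i.d. with $\mathbb P(\ell_i=\ell)=\alpha_\ell$; given $\ell_i$, $x_i\sim\mu_{\ell_i}$; and $y_i\in[-1,1]$ is drawn from a fixed conditional law of $y$ given $x=x_i$ (independently over $i$), so that $(x_i,y_i)_{i\in[n]}$ are i.i.d. with covariate law $\mu$. Let $g(x)=\mathbb E[y\mid x]$, $z_i=y_i-g(x_i)$, $\sigma^2=\mathbb E^\mu[\mathrm{Var}(y\mid x)]>0$. Let $L,\epsilon>0$ and let $\mathcal F$ be a finite class of $L$-Lipschitz functions $\mathbb R^d\to[-1,1]$. If $d\ge C_1\frac{cL^2\sigma^2}{\epsilon^2}$, then \[ \mathbb P\Big(\exists f\in\mathcal F:\ \tfrac1n\sum_{i=1}^n\big(f(x_i)-\mathbb E^{\mu_{\ell_i}}[f]\big)z_i\ge\tfrac{\epsilon}{8}\Big)\le\exp\Big(-\frac{n\sigma^4}{8}\Big)+\exp\Big(\log|\mathcal F|-\frac{\epsilon^2nd}{C_1cL^2\sigma^2}\Big). \]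
   Context: A probability measure $\nu$ on $\mathbb R^d$ satisfies $c$-isoperimetry if for every bounded $L$-Lipschitz (w.r.t. the Euclidean norm) $f:\mathbb R^d\to\mathbb R$ and every $t\ge0$, $\mathbb P_{x\sim\nu}[|f(x)-\mathbb E_\nu f|\ge t]\le 2e^{-dt^2/(2cL^2)}$. $\mathbb E^{\mu_{\ell}}[f]=\int f\,d\mu_\ell$. *)

theory Defs
  imports "HOL-Probability.Probability"
begin

text \<open>R^d is modelled as extensional functions on the index set {..<d},
  carrying the product Borel sigma-algebra.\<close>
definition RdM :: "nat \<Rightarrow> (nat \<Rightarrow> real) measure" where
  "RdM d = PiM {..<d} (\<lambda>_. borel)"

definition eucl_dist :: "nat \<Rightarrow> (nat \<Rightarrow> real) \<Rightarrow> (nat \<Rightarrow> real) \<Rightarrow> real" where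
  "eucl_dist d x y = sqrt (\<Sum>i<d. (x i - y i)^2)"

definition lipschitz_Rd :: "nat \<Rightarrow> real \<Rightarrow> ((nat \<Rightarrow> real) \<Rightarrow> real) \<Rightarrow> bool" where
  "lipschitz_Rd d L f \<longleftrightarrow>
     (\<forall>x\<in>space (RdM d). \<forall>y\<in>space (RdM d). \<bar>f x - f y\<bar> \<le> L * eucl_dist d x y)"

definition isoperimetric :: "nat \<Rightarrow> real \<Rightarrow> (nat \<Rightarrow> real) measure \<Rightarrow> bool" where
  "isoperimetric d c \<nu> \<longleftrightarrow> prob_space \<nu> \<and> sets \<nu> = sets (RdM d) \<and>
     (\<forall>f L t. L > 0 \<longrightarrow> lipschitz_Rd d L f \<longrightarrow> bounded (f ` space (RdM d)) \<longrightarrow> t \<ge> 0 \<longrightarrow>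
        measure \<nu> {x \<in> space \<nu>. \<bar>f x - integral\<^sup>L \<nu> f\<bar> \<ge> t}
          \<le> 2 * exp (- real d * t^2 / (2 * c * L^2)))"

definition label_law :: "nat \<Rightarrow> (nat \<Rightarrow> real) \<Rightarrow> nat measure" where
  "label_law k \<alpha> = density (count_space {..<k}) (\<lambda>l. ennreal (\<alpha> l))"

definition joint_law :: "nat \<Rightarrow> nat \<Rightarrow> (nat \<Rightarrow> real) \<Rightarrow> (nat \<Rightarrow> (nat \<Rightarrow> real) measure)
    \<Rightarrow> ((nat \<Rightarrow> real) \<Rightarrow> real measure) \<Rightarrow> (nat \<times> (nat \<Rightarrow> real) \<times> real) measure" where
  "joint_law d k \<alpha> \<mu> K =
     bind (label_law k \<alpha>) (\<lambda>l. bind (\<mu> l) (\<lambda>x.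
       distr (K x) (count_space {..<k} \<Otimes>\<^sub>M RdM d \<Otimes>\<^sub>M borel) (\<lambda>y. (l, x, y))))"

definition sample_law :: "nat \<Rightarrow> nat \<Rightarrow> (nat \<Rightarrow> real) \<Rightarrow> (nat \<Rightarrow> (nat \<Rightarrow> real) measure)
    \<Rightarrow> ((nat \<Rightarrow> real) \<Rightarrow> real measure) \<Rightarrow> nat \<Rightarrow> (nat \<Rightarrow> nat \<times> (nat \<Rightarrow> real) \<times> real) measure" where
  "sample_law d k \<alpha> \<mu> K n = PiM {..<n} (\<lambda>_. joint_law d k \<alpha> \<mu> K)"

definition cond_mean :: "((nat \<Rightarrow> real) \<Rightarrow> real measure) \<Rightarrow> (nat \<Rightarrow> real) \<Rightarrow> real" where
  "cond_mean K x = (\<integral>y. y \<partial>K x)"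

definition cond_var :: "((nat \<Rightarrow> real) \<Rightarrow> real measure) \<Rightarrow> (nat \<Rightarrow> real) \<Rightarrow> real" where
  "cond_var K x = (\<integral>y. (y - cond_mean K x)^2 \<partial>K x)"

text \<open>sigma^2 = E^mu [Var(y|x)] with mu = sum_l alpha_l mu_l.\<close>
definition noise_var :: "nat \<Rightarrow> (nat \<Rightarrow> real) \<Rightarrow> (nat \<Rightarrow> (nat \<Rightarrow> real) measure)
    \<Rightarrow> ((nat \<Rightarrow> real) \<Rightarrow> real measure) \<Rightarrow> real" where
  "noise_var k \<alpha> \<mu> K = (\<Sum>l<k. \<alpha> l * (\<integral>x. cond_var K x \<partial>\<mu> l))"

end

(*
  Write z_i = y_i - g(x_i) for the noise and a_i(f) = f(x_i) - E^{mu_{l_i}}[f] for the centred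
  feature. By Cauchy-Schwarz, an average correlation (1/n) sum a_i(f) z_i >= eps/8 forces either
  sum z_i^2 >= 2 n sigma^2, which by Hoeffding has probability at most exp(-n sigma^4/8), or
  sum a_i(f)^2 >= n eps^2/(128 sigma^2). Isoperimetry makes a_i(f)^2 sub-exponential at scale
  c L^2/d: E exp(d a_i(f)^2/(4 c L^2)) <= 6. A Chernoff bound for the i.i.d. sum then gives the
  second event probability at most 6^n exp(-n d eps^2/(512 c L^2 sigma^2)), which is at most
  exp(-n d eps^2/(4096 c L^2 sigma^2)) once d >= 4096 c L^2 sigma^2/eps^2, and a union bound over
  F yields the theorem with C_1 = 4096.
*)
theory Submission
  imports Defs
begin

lemma space_RdM: "space (RdM d) = PiE {..<d} (\<lambda>_. UNIV)"
  by (simp add: RdM_def space_PiM)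

lemma lipschitz_Rd_restrict_continuous:
  assumes lip: "lipschitz_Rd d L f"
  shows "continuous_on UNIV (\<lambda>x. f (restrict x {..<d}))"
proof (rule continuous_on_sequentiallyI)
  fix u :: "nat \<Rightarrow> nat \<Rightarrow> real" and a assume "u \<longlonglongrightarrow> a"
  then have "(\<lambda>n. u n i) \<longlonglongrightarrow> a i" for i
    by (intro isCont_tendsto_compose[of a "\<lambda>x. x i"])
       (auto intro: continuous_on_interior[OF continuous_on_product_coordinates])
  then have "(\<lambda>n. L * sqrt (\<Sum>i<d. (u n i - a i)^2)) \<longlonglongrightarrow> L * sqrt (\<Sum>i<d. (a i - a i)^2)"
    by (intro tendsto_intros)
  then have lim0: "(\<lambda>n. L * sqrt (\<Sum>i<d. (u n i - a i)^2)) \<longlonglongrightarrow> 0" by simp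
  have bound: "norm (f (restrict (u n) {..<d}) - f (restrict a {..<d}))
      \<le> L * sqrt (\<Sum>i<d. (u n i - a i)^2)" for n
  proof -
    have "\<bar>f (restrict (u n) {..<d}) - f (restrict a {..<d})\<bar>
        \<le> L * eucl_dist d (restrict (u n) {..<d}) (restrict a {..<d})"
      using lip unfolding lipschitz_Rd_def by (simp add: space_RdM)
    also have "eucl_dist d (restrict (u n) {..<d}) (restrict a {..<d}) = sqrt (\<Sum>i<d. (u n i - a i)^2)"
      unfolding eucl_dist_def by (intro arg_cong[where f=sqrt] sum.cong) auto
    finally show ?thesis by (simp only: real_norm_def)
  qed
  show "(\<lambda>n. f (restrict (u n) {..<d})) \<longlonglongrightarrow> f (restrict a {..<d})"
    by (rule LIM_zero_cancel, rule Lim_null_comparison[OF _ lim0]) (use bound in auto)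
qed

lemma RdM_measurable_PiM_UNIV: "(\<lambda>x. x) \<in> RdM d \<rightarrow>\<^sub>M PiM UNIV (\<lambda>_. borel)"
proof (rule measurable_PiM_single')
  fix i :: nat
  show "(\<lambda>x. x i) \<in> RdM d \<rightarrow>\<^sub>M borel"
  proof (cases "i < d")
    case True
    then show ?thesis unfolding RdM_def by (intro measurable_component_singleton) auto
  next
    case False
    \<comment> \<open>Outside the index set, points of RdM d take the junk value undefined.\<close>
    have "(\<lambda>x. x i) \<in> RdM d \<rightarrow>\<^sub>M borel \<longleftrightarrow> (\<lambda>x. undefined::real) \<in> RdM d \<rightarrow>\<^sub>M borel"
      by (rule measurable_cong) (use False in \<open>auto simp: space_RdM PiE_def extensional_def\<close>)
    then show ?thesis by simp
  qed
qed auto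

lemma lipschitz_Rd_measurable:
  assumes "lipschitz_Rd d L f"
  shows "f \<in> borel_measurable (RdM d)"
proof -
  have "(\<lambda>x. f (restrict x {..<d})) \<in> borel_measurable (PiM UNIV (\<lambda>_. borel))"
    unfolding measurable_cong_sets[OF sets_PiM_equal_borel refl]
    using lipschitz_Rd_restrict_continuous[OF assms] by (rule borel_measurable_continuous_onI)
  from measurable_comp[OF RdM_measurable_PiM_UNIV this] show ?thesis
    by (rule measurable_cong[THEN iffD1, rotated])
      (auto simp: space_RdM PiE_def extensional_restrict)
qed

lemma exp_le_layer_sum:
  fixes v :: real
  assumes "v \<le> real N"
  shows "exp v \<le> exp 1 + (\<Sum>j\<in>{1..N}. exp (real j + 1) * of_bool (real j \<le> v))"
proof (cases "v < 1")
  case True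
  then have "exp v \<le> exp 1" by simp
  moreover have "0 \<le> (\<Sum>j\<in>{1..N}. exp (real j + 1) * of_bool (real j \<le> v))"
    by (intro sum_nonneg) auto
  ultimately show ?thesis by linarith
next
  case False
  define j where "j = nat \<lfloor>v\<rfloor>"
  have j: "real j \<le> v" "v < real j + 1" "1 \<le> j"
    using False by (auto simp: j_def) linarith+
  have "j \<le> N" using j(1) assms by linarith
  have "exp v \<le> exp (real j + 1) * of_bool (real j \<le> v)"
    using j by simp
  also have "\<dots> \<le> (\<Sum>j\<in>{1..N}. exp (real j + 1) * of_bool (real j \<le> v))"
    by (rule member_le_sum) (use j \<open>j \<le> N\<close> in auto)
  finally show ?thesis
    using exp_gt_zero[of 1] by linarith
qed

lemma exp_geometric_tail_le_6:
  "exp 1 + (\<Sum>j\<in>{1..N}. exp (real j + 1) * (2 * exp (- 2 * real j))) \<le> (6::real)"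
proof -
  have "(\<Sum>j\<in>{1..N}. exp (real j + 1) * (2 * exp (- 2 * real j)))
      = 2 * exp 1 * (\<Sum>j\<in>{1..N}. exp (-1) ^ j)"
    unfolding sum_distrib_left
    by (intro sum.cong refl) (simp add: mult_exp_exp exp_diff exp_minus field_simps
        flip: exp_of_nat_mult)
  also have "(\<Sum>j\<in>{1..N}. exp (-1::real) ^ j) \<le> exp (-1) / (1 - exp (-1))"
    by (cases "N < 1") (auto simp: sum_gp divide_right_mono)
  also have "exp (-1) / (1 - exp (-1)) = 1 / (exp 1 - 1 :: real)"
    by (simp add: exp_minus field_simps)
  finally have "exp 1 + (\<Sum>j\<in>{1..N}. exp (real j + 1) * (2 * exp (- 2 * real j)))
      \<le> exp 1 + 2 * exp 1 * (1 / (exp 1 - 1))"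
    by (simp add: mult_left_mono)
  also have "\<dots> \<le> 6"
  proof -
    have e2: "2 \<le> exp (1::real)" using exp_ge_add_one_self[of 1] by simp
    have "(exp 1 - 2) * (exp 1 - 3) \<le> (0::real)"
      using e2 exp_le by (intro mult_nonneg_nonpos) auto
    then show ?thesis using e2 by (simp add: field_simps)
  qed
  finally show ?thesis .
qed

lemma exp_moment_le_6_of_tail:
  assumes "prob_space M" and [measurable]: "u \<in> borel_measurable M"
    and bounded: "\<And>x. x \<in> space M \<Longrightarrow> u x \<le> B"
    and tail: "\<And>j::nat. j \<ge> 1 \<Longrightarrow> measure M {x\<in>space M. real j \<le> u x} \<le> 2 * exp (- 2 * real j)"
  shows "integrable M (\<lambda>x. exp (u x))" and "(\<integral>x. exp (u x) \<partial>M) \<le> 6"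
proof -
  interpret prob_space M by fact
  show int_exp: "integrable M (\<lambda>x. exp (u x))"
    by (rule integrable_const_bound[where B="exp B"]) (auto simp: bounded)
  define N where "N = nat \<lceil>B\<rceil>"
  define A where "A j = {x\<in>space M. real j \<le> u x}" for j :: nat
  have [measurable]: "A j \<in> sets M" for j unfolding A_def by measurable
  define S where "S x = (\<Sum>j\<in>{1..N}. exp (real j + 1) * indicator (A j) x)" for x
  have int_S: "integrable M S"
    unfolding S_def by (intro Bochner_Integration.integrable_sum integrable_mult_right
        integrable_real_indicator) (auto simp: less_top[symmetric])
  have "exp (u x) \<le> exp 1 + S x" if "x \<in> space M" for x
  proof -
    have "u x \<le> real N" using bounded[OF that] unfolding N_def by linarith
    then show ?thesis
      using exp_le_layer_sum[of "u x" N] that by (simp add: S_def A_def indicator_def)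
  qed
  then have "(\<integral>x. exp (u x) \<partial>M) \<le> (\<integral>x. exp 1 + S x \<partial>M)"
    using int_exp int_S by (intro integral_mono) auto
  also have "\<dots> = exp 1 + (\<Sum>j\<in>{1..N}. exp (real j + 1) * measure M (A j))"
  proof -
    have "(\<integral>x. S x \<partial>M) = (\<Sum>j\<in>{1..N}. \<integral>x. exp (real j + 1) * indicator (A j) x \<partial>M)"
      unfolding S_def by (intro Bochner_Integration.integral_sum integrable_mult_right
          integrable_real_indicator) (auto simp: less_top[symmetric])
    then show ?thesis
      using int_S by (simp add: prob_space)
  qed
  also have "\<dots> \<le> exp 1 + (\<Sum>j\<in>{1..N}. exp (real j + 1) * (2 * exp (- 2 * real j)))"
    unfolding A_def by (intro add_left_mono sum_mono mult_left_mono tail) auto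
  also have "\<dots> \<le> 6"
    by (rule exp_geometric_tail_le_6)
  finally show "(\<integral>x. exp (u x) \<partial>M) \<le> 6" .
qed

lemma (in prob_space) abs_expectation_le:
  fixes f :: "'a \<Rightarrow> real"
  assumes "f \<in> borel_measurable M" and "AE x in M. \<bar>f x\<bar> \<le> B"
  shows "\<bar>expectation f\<bar> \<le> B"
proof -
  have "integrable M f"
    by (rule integrable_const_bound[where B=B]) (use assms in auto)
  then have "expectation f \<le> B" and "expectation (\<lambda>x. - f x) \<le> B"
    using assms(2) by (intro integral_le_const; auto elim: eventually_mono)+
  then show ?thesis by (simp add: abs_le_iff)
qed

lemma isoperimetric_deviation_sq_tail:
  assumes iso: "isoperimetric d c \<nu>" and c: "c > 0" and L: "L > 0" and d: "d > 0"
    and lip: "lipschitz_Rd d L f" and f_bounded: "\<And>x. x \<in> space (RdM d) \<Longrightarrow> \<bar>f x\<bar> \<le> 1"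
    and s: "s \<ge> 0"
  shows "measure \<nu> {x\<in>space \<nu>. s \<le> real d / (c * L^2) / 4 * (f x - integral\<^sup>L \<nu> f)^2}
    \<le> 2 * exp (- 2 * s)"
proof -
  define D where "D = real d / (c * L^2)"
  define t where "t = sqrt (4 * s / D)"
  have D: "D > 0" using d c L by (simp add: D_def)
  have t: "t \<ge> 0" "t^2 = 4 * s / D" using D s by (auto simp: t_def)
  have "s \<le> D / 4 * (f x - integral\<^sup>L \<nu> f)^2 \<longleftrightarrow> t \<le> \<bar>f x - integral\<^sup>L \<nu> f\<bar>" for x
  proof -
    have "s \<le> D / 4 * (f x - integral\<^sup>L \<nu> f)^2 \<longleftrightarrow> t^2 \<le> \<bar>f x - integral\<^sup>L \<nu> f\<bar>^2"
      using D by (simp add: t(2) field_simps)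
    also have "\<dots> \<longleftrightarrow> t \<le> \<bar>f x - integral\<^sup>L \<nu> f\<bar>"
      using t(1) by (simp add: abs_le_square_iff[symmetric])
    finally show ?thesis .
  qed
  then have "measure \<nu> {x\<in>space \<nu>. s \<le> real d / (c * L^2) / 4 * (f x - integral\<^sup>L \<nu> f)^2}
      = measure \<nu> {x\<in>space \<nu>. t \<le> \<bar>f x - integral\<^sup>L \<nu> f\<bar>}"
    by (simp add: D_def)
  also have "\<dots> \<le> 2 * exp (- real d * t^2 / (2 * c * L^2))"
  proof -
    have "bounded (f ` space (RdM d))"
      unfolding bounded_iff using f_bounded by (intro exI[of _ 1]) auto
    then show ?thesis using iso L lip t(1) unfolding isoperimetric_def by blast
  qed
  also have "- real d * t^2 / (2 * c * L^2) = - 2 * s"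
    using D c L by (simp add: t(2) D_def field_simps)
  finally show ?thesis .
qed

lemma isoperimetric_exp_square_moment:
  assumes iso: "isoperimetric d c \<nu>" and c: "c > 0" and L: "L > 0" and d: "d > 0"
    and lip: "lipschitz_Rd d L f" and f_bounded: "\<And>x. x \<in> space (RdM d) \<Longrightarrow> \<bar>f x\<bar> \<le> 1"
  defines "u \<equiv> \<lambda>x. real d / (c * L^2) / 4 * (f x - integral\<^sup>L \<nu> f)^2"
  shows "integrable \<nu> (\<lambda>x. exp (u x))" and "(\<integral>x. exp (u x) \<partial>\<nu>) \<le> 6"
proof -
  have "prob_space \<nu>" and sets_\<nu>: "sets \<nu> = sets (RdM d)"
    using iso by (auto simp: isoperimetric_def)
  interpret prob_space \<nu> by fact
  have space_\<nu>: "space \<nu> = space (RdM d)" using sets_\<nu> by (rule sets_eq_imp_space_eq)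
  have [measurable]: "f \<in> borel_measurable \<nu>"
    using lipschitz_Rd_measurable[OF lip] by (simp add: measurable_cong_sets[OF sets_\<nu> refl])
  have mean: "\<bar>integral\<^sup>L \<nu> f\<bar> \<le> 1"
    by (rule abs_expectation_le) (auto simp: space_\<nu> f_bounded)
  have "u \<in> borel_measurable \<nu>" unfolding u_def by measurable
  moreover have "u x \<le> real d / (c * L^2)" if "x \<in> space \<nu>" for x
  proof -
    have "\<bar>f x - integral\<^sup>L \<nu> f\<bar> \<le> 2"
      using f_bounded[of x] that mean by (auto simp: space_\<nu>)
    then have "(f x - integral\<^sup>L \<nu> f)^2 \<le> 2^2" by (subst abs_le_square_iff[symmetric]) simp
    then have "u x \<le> real d / (c * L^2) / 4 * 2^2"
      unfolding u_def using c L by (intro mult_left_mono) auto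
    then show ?thesis by simp
  qed
  moreover have "measure \<nu> {x\<in>space \<nu>. real j \<le> u x} \<le> 2 * exp (- 2 * real j)" for j :: nat
    unfolding u_def using isoperimetric_deviation_sq_tail[OF iso c L d lip f_bounded, of "real j"] by simp
  ultimately show "integrable \<nu> (\<lambda>x. exp (u x))" and "(\<integral>x. exp (u x) \<partial>\<nu>) \<le> 6"
    using exp_moment_le_6_of_tail[OF \<open>prob_space \<nu>\<close>, of u] by blast+
qed

lemma indep_vars_PiM_components:
  assumes M: "prob_space M" and I: "finite I" "I \<noteq> {}" and h: "h \<in> M \<rightarrow>\<^sub>M N"
  shows "prob_space.indep_vars (PiM I (\<lambda>_. M)) (\<lambda>_. N) (\<lambda>i \<omega>. h (\<omega> i)) I"
proof -
  interpret product_prob_space "\<lambda>_. M" by (rule product_prob_spaceI) fact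
  interpret P: prob_space "PiM I (\<lambda>_. M)" by (rule prob_space_PiM) (use M in auto)
  have "distr (PiM I (\<lambda>_. M)) (PiM I (\<lambda>_. M)) (\<lambda>\<omega>. \<lambda>i\<in>I. \<omega> i) = PiM I (\<lambda>_. M)"
    by (subst distr_cong[where g="\<lambda>\<omega>. \<omega>"]) (auto simp: space_PiM PiE_def extensional_restrict)
  also have "\<dots> = PiM I (\<lambda>i. distr (PiM I (\<lambda>_. M)) M (\<lambda>\<omega>. \<omega> i))"
    by (intro PiM_cong refl) (simp add: M distr_PiM_component[where M="\<lambda>_. M"])
  finally have "P.indep_vars (\<lambda>_. M) (\<lambda>i \<omega>. \<omega> i) I"
    using I by (subst P.indep_vars_iff_distr_eq_PiM') auto
  from P.indep_vars_compose2[OF this h] show ?thesis .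
qed

lemma PiM_sum_tail_le_mgf:
  assumes "prob_space M" and I: "finite I" and [measurable]: "h \<in> borel_measurable M"
    and s: "s \<ge> 0" and B: "B \<ge> 0" and mgf: "(\<integral>\<^sup>+x. ennreal (exp (s * h x)) \<partial>M) \<le> ennreal B"
  shows "measure (PiM I (\<lambda>_. M)) {\<omega>\<in>space (PiM I (\<lambda>_. M)). t \<le> (\<Sum>i\<in>I. h (\<omega> i))}
    \<le> exp (- s * t) * B ^ card I"
proof -
  interpret product_prob_space "\<lambda>_. M" by (rule product_prob_spaceI) fact
  define P where "P = PiM I (\<lambda>_. M)"
  define G where "G = {\<omega>\<in>space P. t \<le> (\<Sum>i\<in>I. h (\<omega> i))}"
  have [measurable]: "(\<lambda>\<omega>. h (\<omega> i)) \<in> borel_measurable P" if "i \<in> I" for i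
    unfolding P_def using that by measurable
  have "G \<in> sets P" unfolding G_def using I by measurable
  \<comment> \<open>Markov's inequality for exp (s (\<Sum> h - t)), which is at least 1 on G.\<close>
  have "indicator G \<omega> \<le> ennreal (exp (- s * t)) * (\<Prod>i\<in>I. ennreal (exp (s * h (\<omega> i))))" for \<omega>
  proof (cases "\<omega> \<in> G")
    case True
    then have "1 \<le> exp (s * ((\<Sum>i\<in>I. h (\<omega> i)) - t))" using s by (simp add: G_def)
    also have "\<dots> = exp (- s * t) * (\<Prod>i\<in>I. exp (s * h (\<omega> i)))"
      using I by (simp add: exp_diff exp_sum sum_distrib_left exp_minus field_simps)
    finally have "ennreal 1 \<le> ennreal (exp (- s * t) * (\<Prod>i\<in>I. exp (s * h (\<omega> i))))"
      by (rule ennreal_leI)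
    then show ?thesis
      using True by (simp add: prod_ennreal ennreal_mult prod_nonneg)
  qed simp
  then have "emeasure P G \<le> (\<integral>\<^sup>+\<omega>. ennreal (exp (- s * t)) * (\<Prod>i\<in>I. ennreal (exp (s * h (\<omega> i)))) \<partial>P)"
    using \<open>G \<in> sets P\<close> by (auto simp flip: nn_integral_indicator intro!: nn_integral_mono)
  also have "\<dots> = ennreal (exp (- s * t)) * (\<integral>\<^sup>+\<omega>. (\<Prod>i\<in>I. ennreal (exp (s * h (\<omega> i)))) \<partial>P)"
    using I by (intro nn_integral_cmult) measurable
  also have "(\<integral>\<^sup>+\<omega>. (\<Prod>i\<in>I. ennreal (exp (s * h (\<omega> i)))) \<partial>P)
      = (\<Prod>i\<in>I. \<integral>\<^sup>+x. ennreal (exp (s * h x)) \<partial>M)"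
    unfolding P_def using I by (intro product_nn_integral_prod) auto
  also have "ennreal (exp (- s * t)) * (\<Prod>i\<in>I. \<integral>\<^sup>+x. ennreal (exp (s * h x)) \<partial>M)
      \<le> ennreal (exp (- s * t)) * (\<Prod>i\<in>I. ennreal B)"
    by (intro mult_left_mono) (simp_all add: mgf power_mono)
  also have "\<dots> = ennreal (exp (- s * t) * B ^ card I)"
    using B by (simp add: prod_ennreal ennreal_mult ennreal_power)
  finally show ?thesis
    unfolding G_def P_def measure_def by (rule enn2real_leI[rotated]) (use B in simp)
qed

lemma PiM_sum_ge_twice_mean:
  assumes M: "prob_space M" and h[measurable]: "h \<in> borel_measurable M"
    and h_range: "AE x in M. h x \<in> {0..B}" and B: "B > 0" and n: "n > 0"
  defines "m \<equiv> integral\<^sup>L M h"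
  shows "measure (PiM {..<n} (\<lambda>_. M))
      {\<omega>\<in>space (PiM {..<n} (\<lambda>_. M)). 2 * real n * m \<le> (\<Sum>i<n. h (\<omega> i))}
    \<le> exp (- 2 * real n * m^2 / B^2)"
proof -
  define P where "P = PiM {..<n} (\<lambda>_. M)"
  interpret prob_space M by fact
  interpret P: prob_space P unfolding P_def using M by (rule prob_space_PiM)
  have component: "distr P M (\<lambda>\<omega>. \<omega> i) = M" if "i < n" for i
    unfolding P_def using that M by (intro distr_PiM_component) auto
  have component_meas: "(\<lambda>\<omega>. \<omega> i) \<in> P \<rightarrow>\<^sub>M M" if "i < n" for i
    unfolding P_def using that by (intro measurable_component_singleton) auto
  have range_i: "AE \<omega> in P. h (\<omega> i) \<in> {0..B}" if "i < n" for i
  proof -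
    have "AE x in distr P M (\<lambda>\<omega>. \<omega> i). h x \<in> {0..B}"
      using h_range by (simp only: component[OF that])
    then show ?thesis by (subst (asm) AE_distr_iff[OF component_meas[OF that]]) auto
  qed
  have mean_i: "P.expectation (\<lambda>\<omega>. h (\<omega> i)) = m" if "i < n" for i
    using integral_distr[OF component_meas[OF that] h] by (simp add: component[OF that] m_def)
  have "m \<ge> 0"
    unfolding m_def using h_range by (intro integral_nonneg_AE) (auto elim: eventually_mono)
  interpret Hoeffding_ineq P "{..<n}" "\<lambda>i \<omega>. h (\<omega> i)" "\<lambda>_. 0" "\<lambda>_. B" "real n * m"
  proof unfold_locales
    show "P.indep_vars (\<lambda>_. borel) (\<lambda>i \<omega>. h (\<omega> i)) {..<n}"
      unfolding P_def using n by (intro indep_vars_PiM_components M h) auto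
    show "finite {..<n}" by simp
    show "\<And>i. i \<in> {..<n} \<Longrightarrow> AE \<omega> in P. h (\<omega> i) \<in> {0..B}" using range_i by simp
    show "real n * m \<equiv> \<Sum>i<n. P.expectation (\<lambda>\<omega>. h (\<omega> i))" using mean_i by simp
  qed
  have "P.prob {\<omega>\<in>space P. (\<Sum>i<n. h (\<omega> i)) \<ge> real n * m + real n * m}
      \<le> exp (- 2 * (real n * m)^2 / (\<Sum>i<n. (B - 0)^2))"
    by (rule Hoeffding_ineq_ge) (use n \<open>m \<ge> 0\<close> B in auto)
  also have "- 2 * (real n * m)^2 / (\<Sum>i<n. (B - 0)^2) = - 2 * real n * m^2 / B^2"
    using n by (simp add: power2_eq_square)
  finally show ?thesis
    by (simp add: P_def algebra_simps)
qed

lemma sum_sq_ge_of_correlation: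
  fixes a z :: "nat \<Rightarrow> real"
  assumes corr: "real n * \<delta> \<le> (\<Sum>i<n. a i * z i)" and \<delta>: "\<delta> \<ge> 0" and v: "v > 0"
    and z: "(\<Sum>i<n. (z i)^2) < 2 * real n * v"
  shows "real n * \<delta>^2 / (2 * v) \<le> (\<Sum>i<n. (a i)^2)"
proof (cases "n = 0")
  case False
  show ?thesis
  proof (rule ccontr)
    assume "\<not> ?thesis"
    then have a: "2 * v * (\<Sum>i<n. (a i)^2) < real n * \<delta>^2"
      using v by (simp add: field_simps)
    have "(real n * \<delta>)^2 \<le> (\<Sum>i<n. a i * z i)^2"
      using corr \<delta> by (intro power_mono) auto
    also have "\<dots> \<le> (\<Sum>i<n. (a i)^2) * (\<Sum>i<n. (z i)^2)"
      by (rule Cauchy_Schwarz_ineq_sum)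
    also have "\<dots> \<le> (\<Sum>i<n. (a i)^2) * (2 * real n * v)"
      using z by (intro mult_left_mono sum_nonneg) auto
    also have "\<dots> = real n * (2 * v * (\<Sum>i<n. (a i)^2))" by simp
    also have "\<dots> < real n * (real n * \<delta>^2)"
      using a False by (intro mult_strict_left_mono) auto
    finally show False by (simp add: power2_eq_square)
  qed
qed simp

locale mixture_model =
  fixes d k :: nat and \<alpha> :: "nat \<Rightarrow> real" and \<mu> :: "nat \<Rightarrow> (nat \<Rightarrow> real) measure"
    and K :: "(nat \<Rightarrow> real) \<Rightarrow> real measure"
  assumes \<alpha>_nonneg: "\<And>l. l < k \<Longrightarrow> \<alpha> l \<ge> 0" and \<alpha>_sum: "(\<Sum>l<k. \<alpha> l) = 1"
    and \<mu>_prob: "\<And>l. l < k \<Longrightarrow> prob_space (\<mu> l)"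
    and sets_\<mu>: "\<And>l. l < k \<Longrightarrow> sets (\<mu> l) = sets (RdM d)"
    and K_measurable: "K \<in> RdM d \<rightarrow>\<^sub>M prob_algebra borel"
    and K_bounded: "\<And>x. x \<in> space (RdM d) \<Longrightarrow> AE y in K x. \<bar>y\<bar> \<le> 1"
begin

definition "\<Omega> = count_space {..<k} \<Otimes>\<^sub>M RdM d \<Otimes>\<^sub>M (borel :: real measure)"

definition "sample_given l x = distr (K x) \<Omega> (\<lambda>y. (l, x, y))"

definition "sample_given_label l = bind (\<mu> l) (sample_given l)"

abbreviation "J \<equiv> joint_law d k \<alpha> \<mu> K"

abbreviation "P n \<equiv> sample_law d k \<alpha> \<mu> K n"

text \<open>A sample is a triple (l, x, y) of label, covariate and response; noise and deviation f
  are the z_i and f(x_i) - E^{mu_{l_i}}[f] of the paper.\<close>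

definition "noise \<omega> = snd (snd \<omega>) - cond_mean K (fst (snd \<omega>))"

definition "deviation f \<omega> = f (fst (snd \<omega>)) - integral\<^sup>L (\<mu> (fst \<omega>)) f"

lemma joint_law_eq: "J = bind (label_law k \<alpha>) sample_given_label"
  unfolding joint_law_def sample_given_label_def sample_given_def \<Omega>_def ..

lemma sample_law_eq: "P n = PiM {..<n} (\<lambda>_. J)"
  by (simp add: sample_law_def)

lemma space_\<mu>: "l < k \<Longrightarrow> space (\<mu> l) = space (RdM d)"
  using sets_\<mu> by (rule sets_eq_imp_space_eq)

lemma K_prob: "x \<in> space (RdM d) \<Longrightarrow> prob_space (K x)"
  and sets_K: "x \<in> space (RdM d) \<Longrightarrow> sets (K x) = sets borel"
  using measurable_space[OF K_measurable] by (auto simp: space_prob_algebra)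

lemma sample_given_measurable: "l < k \<Longrightarrow> sample_given l \<in> RdM d \<rightarrow>\<^sub>M prob_algebra \<Omega>"
  unfolding sample_given_def \<Omega>_def
  by (rule measurable_distr_prob_space2[OF K_measurable]) auto

lemma sample_given_label_space: "l < k \<Longrightarrow> sample_given_label l \<in> space (prob_algebra \<Omega>)"
proof -
  assume l: "l < k"
  have \<mu>: "\<mu> l \<in> space (prob_algebra (RdM d))"
    using l \<mu>_prob sets_\<mu> by (auto simp: space_prob_algebra)
  show ?thesis
    unfolding sample_given_label_def space_prob_algebra
    using prob_space_bind'[OF \<mu> sample_given_measurable] sets_bind'[OF \<mu> sample_given_measurable] l
    by auto
qed

lemma label_law_space: "label_law k \<alpha> \<in> space (prob_algebra (count_space {..<k}))"
proof -
  have "emeasure (label_law k \<alpha>) {..<k} = (\<Sum>l<k. ennreal (\<alpha> l))"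
    unfolding label_law_def
    by (subst emeasure_density) (auto simp: nn_integral_count_space_finite intro!: sum.cong)
  also have "\<dots> = 1" using \<alpha>_nonneg by (subst sum_ennreal) (auto simp: \<alpha>_sum)
  finally have "prob_space (label_law k \<alpha>)"
    by (intro prob_spaceI) (simp add: label_law_def)
  then show ?thesis by (auto simp: space_prob_algebra label_law_def)
qed

lemma joint_law_prob: "prob_space J" and sets_joint_law: "sets J = sets \<Omega>"
proof -
  have "sample_given_label \<in> count_space {..<k} \<rightarrow>\<^sub>M prob_algebra \<Omega>"
    using sample_given_label_space by auto
  then show "prob_space J" "sets J = sets \<Omega>"
    unfolding joint_law_eq using prob_space_bind' sets_bind' label_law_space by blast+
qed

lemma space_joint_law: "space J = space \<Omega>"
  using sets_joint_law by (rule sets_eq_imp_space_eq)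

lemma measurable_joint_law_iff: "h \<in> J \<rightarrow>\<^sub>M N \<longleftrightarrow> h \<in> \<Omega> \<rightarrow>\<^sub>M N"
  by (simp only: measurable_cong_sets[OF sets_joint_law refl])

lemma nn_integral_sample_given_label:
  assumes l: "l < k" and h[measurable]: "h \<in> borel_measurable \<Omega>"
  shows "(\<integral>\<^sup>+\<omega>. h \<omega> \<partial>sample_given_label l) = (\<integral>\<^sup>+x. (\<integral>\<^sup>+y. h (l, x, y) \<partial>K x) \<partial>\<mu> l)"
proof -
  have "sample_given l \<in> \<mu> l \<rightarrow>\<^sub>M subprob_algebra \<Omega>"
    using measurable_prob_algebraD[OF sample_given_measurable] l
    by (simp add: measurable_cong_sets[OF sets_\<mu> refl])
  then have "(\<integral>\<^sup>+\<omega>. h \<omega> \<partial>sample_given_label l) = (\<integral>\<^sup>+x. (\<integral>\<^sup>+\<omega>. h \<omega> \<partial>sample_given l x) \<partial>\<mu> l)"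
    unfolding sample_given_label_def by (rule nn_integral_bind[OF h])
  also have "\<dots> = (\<integral>\<^sup>+x. (\<integral>\<^sup>+y. h (l, x, y) \<partial>K x) \<partial>\<mu> l)"
  proof (rule nn_integral_cong)
    fix x assume "x \<in> space (\<mu> l)"
    then have x: "x \<in> space (RdM d)" using l space_\<mu> by auto
    have "(\<lambda>y. (l, x, y)) \<in> K x \<rightarrow>\<^sub>M \<Omega>"
      using l x unfolding measurable_cong_sets[OF sets_K[OF x] refl] \<Omega>_def by auto
    then show "(\<integral>\<^sup>+\<omega>. h \<omega> \<partial>sample_given l x) = (\<integral>\<^sup>+y. h (l, x, y) \<partial>K x)"
      unfolding sample_given_def by (subst nn_integral_distr) auto
  qed
  finally show ?thesis .
qed

lemma nn_integral_joint_law: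
  assumes h[measurable]: "h \<in> borel_measurable \<Omega>"
  shows "(\<integral>\<^sup>+\<omega>. h \<omega> \<partial>J) = (\<Sum>l<k. ennreal (\<alpha> l) * (\<integral>\<^sup>+x. (\<integral>\<^sup>+y. h (l, x, y) \<partial>K x) \<partial>\<mu> l))"
proof -
  have "(\<integral>\<^sup>+\<omega>. h \<omega> \<partial>J) = (\<integral>\<^sup>+l. (\<integral>\<^sup>+\<omega>. h \<omega> \<partial>sample_given_label l) \<partial>label_law k \<alpha>)"
    unfolding joint_law_eq using sample_given_label_space
    by (intro nn_integral_bind[OF h measurable_prob_algebraD]) (auto simp: label_law_def)
  also have "\<dots> = (\<Sum>l<k. ennreal (\<alpha> l) * (\<integral>\<^sup>+\<omega>. h \<omega> \<partial>sample_given_label l))"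
    unfolding label_law_def
    by (subst nn_integral_density) (auto simp: nn_integral_count_space_finite)
  finally show ?thesis
    by (simp add: nn_integral_sample_given_label)
qed

lemma cond_mean_measurable[measurable]: "cond_mean K \<in> borel_measurable (RdM d)"
  using measurable_comp[OF measurable_prob_algebraD[OF K_measurable]
      integral_measurable_subprob_algebra[of "\<lambda>y::real. y" borel]]
  by (simp add: comp_def cond_mean_def[abs_def])

lemma cond_noise_sq_bounded:
  assumes x: "x \<in> space (RdM d)"
  shows "AE y in K x. (y - cond_mean K x)^2 \<le> 4"
proof -
  interpret prob_space "K x" by (rule K_prob[OF x])
  have [measurable]: "(\<lambda>y. y) \<in> borel_measurable (K x)"
    by (simp add: measurable_cong_sets[OF sets_K[OF x] refl])
  have mean_bounded: "\<bar>cond_mean K x\<bar> \<le> 1"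
    unfolding cond_mean_def using K_bounded[OF x] by (intro abs_expectation_le) auto
  show ?thesis
    using K_bounded[OF x]
  proof eventually_elim
    case (elim y)
    then have "\<bar>y - cond_mean K x\<bar> \<le> 2" using mean_bounded by (simp add: abs_le_iff)
    then have "(y - cond_mean K x)^2 \<le> 2^2" by (simp only: abs_le_square_iff[symmetric])
    then show ?case by simp
  qed
qed

lemma cond_var_nonneg_le_4:
  assumes x: "x \<in> space (RdM d)"
  shows "(\<integral>\<^sup>+y. ennreal ((y - cond_mean K x)^2) \<partial>K x) = ennreal (cond_var K x)"
    and "0 \<le> cond_var K x" and "cond_var K x \<le> 4"
proof -
  interpret prob_space "K x" by (rule K_prob[OF x])
  have [measurable]: "(\<lambda>y. (y - cond_mean K x)^2) \<in> borel_measurable (K x)"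
    by (simp add: measurable_cong_sets[OF sets_K[OF x] refl])
  have int: "integrable (K x) (\<lambda>y. (y - cond_mean K x)^2)"
    by (rule integrable_const_bound[where B=4]) (use cond_noise_sq_bounded[OF x] in auto)
  show "(\<integral>\<^sup>+y. ennreal ((y - cond_mean K x)^2) \<partial>K x) = ennreal (cond_var K x)"
    unfolding cond_var_def by (rule nn_integral_eq_integral[OF int]) auto
  show "0 \<le> cond_var K x" unfolding cond_var_def by (rule integral_nonneg_AE) auto
  show "cond_var K x \<le> 4"
    unfolding cond_var_def using int cond_noise_sq_bounded[OF x] by (rule integral_le_const)
qed

lemma cond_var_measurable[measurable]: "cond_var K \<in> borel_measurable (RdM d)"
proof -
  have "(\<lambda>x. \<integral>\<^sup>+y. ennreal ((y - cond_mean K x)^2) \<partial>K x) \<in> borel_measurable (RdM d)"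
    by (rule nn_integral_measurable_subprob_algebra2[OF _ measurable_prob_algebraD[OF K_measurable]])
      measurable
  then have "(\<lambda>x. enn2real (\<integral>\<^sup>+y. ennreal ((y - cond_mean K x)^2) \<partial>K x)) \<in> borel_measurable (RdM d)"
    by measurable
  then show ?thesis
    by (rule measurable_cong[THEN iffD1, rotated]) (simp add: cond_var_nonneg_le_4)
qed

lemma weighted_cond_var_nonneg: "l < k \<Longrightarrow> 0 \<le> \<alpha> l * (\<integral>x. cond_var K x \<partial>\<mu> l)"
  using \<alpha>_nonneg
  by (intro mult_nonneg_nonneg integral_nonneg_AE) (auto simp: space_\<mu> cond_var_nonneg_le_4)

lemma noise_measurable[measurable]: "noise \<in> borel_measurable \<Omega>"
proof -
  have "(\<lambda>\<omega>. snd (snd \<omega>) - cond_mean K (fst (snd \<omega>)))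
     \<in> borel_measurable (count_space {..<k} \<Otimes>\<^sub>M RdM d \<Otimes>\<^sub>M (borel :: real measure))"
    by measurable
  then show ?thesis unfolding noise_def[abs_def] \<Omega>_def .
qed

lemma nn_integral_noise_sq: "(\<integral>\<^sup>+\<omega>. ennreal ((noise \<omega>)^2) \<partial>J) = ennreal (noise_var k \<alpha> \<mu> K)"
proof -
  have m: "(\<lambda>\<omega>. ennreal ((noise \<omega>)^2)) \<in> borel_measurable \<Omega>" by measurable
  have "(\<integral>\<^sup>+\<omega>. ennreal ((noise \<omega>)^2) \<partial>J)
      = (\<Sum>l<k. ennreal (\<alpha> l) * (\<integral>\<^sup>+x. (\<integral>\<^sup>+y. ennreal ((y - cond_mean K x)^2) \<partial>K x) \<partial>\<mu> l))"
    using nn_integral_joint_law[OF m] by (simp add: noise_def)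
  also have "\<dots> = (\<Sum>l<k. ennreal (\<alpha> l * (\<integral>x. cond_var K x \<partial>\<mu> l)))"
  proof (rule sum.cong[OF refl])
    fix l assume l: "l \<in> {..<k}"
    interpret prob_space "\<mu> l" using \<mu>_prob l by auto
    have [measurable]: "cond_var K \<in> borel_measurable (\<mu> l)"
      using l by (simp add: measurable_cong_sets[OF sets_\<mu> refl])
    have "(\<integral>\<^sup>+x. (\<integral>\<^sup>+y. ennreal ((y - cond_mean K x)^2) \<partial>K x) \<partial>\<mu> l) = (\<integral>\<^sup>+x. ennreal (cond_var K x) \<partial>\<mu> l)"
      using l by (intro nn_integral_cong) (simp add: space_\<mu> cond_var_nonneg_le_4)
    also have "\<dots> = ennreal (\<integral>x. cond_var K x \<partial>\<mu> l)"
      using l by (intro nn_integral_eq_integral integrable_const_bound[where B=4])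
        (auto simp: space_\<mu> cond_var_nonneg_le_4)
    finally show "ennreal (\<alpha> l) * (\<integral>\<^sup>+x. (\<integral>\<^sup>+y. ennreal ((y - cond_mean K x)^2) \<partial>K x) \<partial>\<mu> l)
      = ennreal (\<alpha> l * (\<integral>x. cond_var K x \<partial>\<mu> l))"
      using \<alpha>_nonneg l by (simp add: ennreal_mult')
  qed
  also have "\<dots> = ennreal (noise_var k \<alpha> \<mu> K)"
    unfolding noise_var_def using weighted_cond_var_nonneg by (intro sum_ennreal) auto
  finally show ?thesis .
qed

lemma AE_joint_law_noise_sq: "AE \<omega> in J. (noise \<omega>)^2 \<in> {0..4}"
proof -
  define N where "N = {\<omega>\<in>space \<Omega>. (noise \<omega>)^2 > 4}"
  have N[measurable]: "N \<in> sets \<Omega>" unfolding N_def by measurable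
  have inner: "(\<integral>\<^sup>+y. indicator N (l, x, y) \<partial>K x) = 0" if "x \<in> space (RdM d)" for l x
  proof -
    have "(\<integral>\<^sup>+y. indicator N (l, x, y) \<partial>K x) = (\<integral>\<^sup>+y. 0 \<partial>K x)"
      using cond_noise_sq_bounded[OF that]
      by (intro nn_integral_cong_AE) (auto simp: N_def noise_def elim: eventually_mono)
    then show ?thesis by simp
  qed
  have "(\<integral>\<^sup>+x. (\<integral>\<^sup>+y. indicator N (l, x, y) \<partial>K x) \<partial>\<mu> l) = 0" if "l < k" for l
    by (subst nn_integral_cong[where v="\<lambda>_. 0"]) (auto simp: space_\<mu>[OF that] inner)
  then have "(\<integral>\<^sup>+\<omega>. indicator N \<omega> \<partial>J) = 0"
    by (subst nn_integral_joint_law) auto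
  then have "emeasure J N = 0"
    using N by (simp add: sets_joint_law)
  moreover have "{\<omega>\<in>space J. (noise \<omega>)^2 \<notin> {0..4}} \<subseteq> N"
    by (auto simp: N_def space_joint_law)
  ultimately show ?thesis
    using N by (intro AE_I[where N=N]) (simp_all add: sets_joint_law)
qed

lemma integral_noise_sq: "(\<integral>\<omega>. (noise \<omega>)^2 \<partial>J) = noise_var k \<alpha> \<mu> K"
proof -
  have "noise_var k \<alpha> \<mu> K \<ge> 0"
    unfolding noise_var_def using weighted_cond_var_nonneg by (intro sum_nonneg) auto
  moreover have "(\<integral>\<omega>. (noise \<omega>)^2 \<partial>J) = enn2real (\<integral>\<^sup>+\<omega>. ennreal ((noise \<omega>)^2) \<partial>J)"
    using AE_joint_law_noise_sq
    by (intro integral_eq_nn_integral) (auto simp: measurable_joint_law_iff elim: eventually_mono)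
  ultimately show ?thesis by (simp add: nn_integral_noise_sq)
qed

lemma deviation_measurable[measurable]:
  assumes "lipschitz_Rd d L f"
  shows "deviation f \<in> borel_measurable \<Omega>"
proof -
  have [measurable]: "f \<in> borel_measurable (RdM d)" using assms by (rule lipschitz_Rd_measurable)
  have [measurable]: "(\<lambda>l. integral\<^sup>L (\<mu> l) f) \<in> borel_measurable (count_space {..<k})" by simp
  show ?thesis unfolding deviation_def[abs_def] \<Omega>_def by measurable
qed

lemma nn_integral_exp_deviation_sq:
  assumes iso: "\<And>l. l < k \<Longrightarrow> isoperimetric d c (\<mu> l)" and c: "c > 0" and L: "L > 0" and d: "d > 0"
    and lip: "lipschitz_Rd d L f" and f_bounded: "\<And>x. x \<in> space (RdM d) \<Longrightarrow> \<bar>f x\<bar> \<le> 1"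
  shows "(\<integral>\<^sup>+\<omega>. ennreal (exp (real d / (c * L^2) / 4 * (deviation f \<omega>)^2)) \<partial>J) \<le> 6"
proof -
  define u where "u l x = exp (real d / (c * L^2) / 4 * (f x - integral\<^sup>L (\<mu> l) f)^2)" for l x
  have "(\<lambda>\<omega>. ennreal (exp (real d / (c * L^2) / 4 * (deviation f \<omega>)^2))) \<in> borel_measurable \<Omega>"
    using lip by measurable
  then have "(\<integral>\<^sup>+\<omega>. ennreal (exp (real d / (c * L^2) / 4 * (deviation f \<omega>)^2)) \<partial>J)
      = (\<Sum>l<k. ennreal (\<alpha> l) * (\<integral>\<^sup>+x. (\<integral>\<^sup>+y. ennreal (u l x) \<partial>K x) \<partial>\<mu> l))"
    by (subst nn_integral_joint_law) (simp_all add: u_def deviation_def)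
  also have "\<dots> \<le> (\<Sum>l<k. ennreal (\<alpha> l) * 6)"
  proof (intro sum_mono mult_left_mono)
    fix l assume l: "l \<in> {..<k}"
    have "(\<integral>\<^sup>+x. (\<integral>\<^sup>+y. ennreal (u l x) \<partial>K x) \<partial>\<mu> l) = (\<integral>\<^sup>+x. ennreal (u l x) \<partial>\<mu> l)"
      using l by (intro nn_integral_cong) (simp add: space_\<mu> K_prob prob_space.emeasure_space_1)
    also have "\<dots> = ennreal (\<integral>x. u l x \<partial>\<mu> l)"
      using isoperimetric_exp_square_moment(1)[OF iso c L d lip f_bounded] l
      by (intro nn_integral_eq_integral) (auto simp: u_def)
    also have "\<dots> \<le> ennreal 6"
      using isoperimetric_exp_square_moment(2)[OF iso c L d lip f_bounded] l
      by (intro ennreal_leI) (simp add: u_def)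
    finally show "(\<integral>\<^sup>+x. (\<integral>\<^sup>+y. ennreal (u l x) \<partial>K x) \<partial>\<mu> l) \<le> 6" by simp
  qed auto
  also have "\<dots> = ennreal (\<Sum>l<k. \<alpha> l) * 6"
    using \<alpha>_nonneg by (subst sum_ennreal[symmetric]) (auto simp: sum_distrib_right)
  finally show ?thesis by (simp add: \<alpha>_sum)
qed

lemma noise_sq_sum_event: "{\<omega>\<in>space (P n). t \<le> (\<Sum>i<n. (noise (\<omega> i))^2)} \<in> sets (P n)"
proof -
  have [measurable]: "noise \<in> borel_measurable J" by (simp add: measurable_joint_law_iff)
  show ?thesis unfolding sample_law_eq by measurable
qed

lemma deviation_sq_sum_event:
  assumes "lipschitz_Rd d L f"
  shows "{\<omega>\<in>space (P n). t \<le> (\<Sum>i<n. (deviation f (\<omega> i))^2)} \<in> sets (P n)"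
proof -
  have [measurable]: "deviation f \<in> borel_measurable J"
    unfolding measurable_joint_law_iff using assms by (rule deviation_measurable)
  show ?thesis unfolding sample_law_eq by measurable
qed

lemma prob_noise_sq_sum_large:
  assumes n: "n > 0"
  shows "measure (P n) {\<omega>\<in>space (P n). 2 * real n * noise_var k \<alpha> \<mu> K \<le> (\<Sum>i<n. (noise (\<omega> i))^2)}
    \<le> exp (- real n * (noise_var k \<alpha> \<mu> K)^2 / 8)"
  using PiM_sum_ge_twice_mean[OF joint_law_prob _ AE_joint_law_noise_sq _ n]
  by (simp add: sample_law_eq integral_noise_sq measurable_joint_law_iff)

lemma prob_deviation_sq_sum_large:
  assumes iso: "\<And>l. l < k \<Longrightarrow> isoperimetric d c (\<mu> l)" and c: "c > 0" and L: "L > 0" and d: "d > 0"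
    and lip: "lipschitz_Rd d L f" and f_bounded: "\<And>x. x \<in> space (RdM d) \<Longrightarrow> \<bar>f x\<bar> \<le> 1"
    and \<theta>: "32 * c * L^2 \<le> real d * \<theta>"
  shows "measure (P n) {\<omega>\<in>space (P n). real n * \<theta> \<le> (\<Sum>i<n. (deviation f (\<omega> i))^2)}
    \<le> exp (- real n * real d * \<theta> / (32 * c * L^2))"
proof -
  define D where "D = real d / (c * L^2)"
  have D\<theta>: "32 \<le> D * \<theta>" using \<theta> c L by (simp add: D_def field_simps)
  have "(\<lambda>\<omega>. (deviation f \<omega>)^2) \<in> borel_measurable J"
    using lip by (simp add: measurable_joint_law_iff)
  then have "measure (P n) {\<omega>\<in>space (P n). real n * \<theta> \<le> (\<Sum>i<n. (deviation f (\<omega> i))^2)}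
      \<le> exp (- (D / 4) * (real n * \<theta>)) * 6 ^ n"
    using PiM_sum_tail_le_mgf[OF joint_law_prob, of "{..<n}" "\<lambda>\<omega>. (deviation f \<omega>)^2" "D / 4" 6]
      nn_integral_exp_deviation_sq[OF iso c L d lip f_bounded] c L
    by (simp add: sample_law_eq D_def)
  also have "6 ^ n = exp (real n * ln 6)"
    by (simp add: exp_of_nat_mult)
  also have "exp (- (D / 4) * (real n * \<theta>)) * exp (real n * ln 6) = exp (real n * (ln 6 - D * \<theta> / 4))"
    by (simp add: mult_exp_exp algebra_simps)
  also have "\<dots> \<le> exp (real n * (- D * \<theta> / 32))"
    using ln_le_minus_one[of 6] D\<theta> by (intro exp_mono mult_left_mono) auto
  also have "real n * (- D * \<theta> / 32) = - real n * real d * \<theta> / (32 * c * L^2)"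
    by (simp add: D_def field_simps)
  finally show ?thesis .
qed

lemma correlation_event_subset:
  assumes n: "n > 0" and \<sigma>: "noise_var k \<alpha> \<mu> K > 0" and \<epsilon>: "\<epsilon> > 0"
  defines "\<theta> \<equiv> \<epsilon>^2 / (128 * noise_var k \<alpha> \<mu> K)"
  shows "{\<omega>\<in>space (P n). \<exists>f\<in>F. (1 / real n) * (\<Sum>i<n. deviation f (\<omega> i) * noise (\<omega> i)) \<ge> \<epsilon> / 8}
    \<subseteq> {\<omega>\<in>space (P n). 2 * real n * noise_var k \<alpha> \<mu> K \<le> (\<Sum>i<n. (noise (\<omega> i))^2)}
      \<union> (\<Union>f\<in>F. {\<omega>\<in>space (P n). real n * \<theta> \<le> (\<Sum>i<n. (deviation f (\<omega> i))^2)})"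
proof
  fix \<omega> assume "\<omega> \<in> {\<omega>\<in>space (P n). \<exists>f\<in>F. (1 / real n) * (\<Sum>i<n. deviation f (\<omega> i) * noise (\<omega> i)) \<ge> \<epsilon> / 8}"
  then obtain f where \<omega>: "\<omega> \<in> space (P n)" and f: "f \<in> F"
    and corr: "(1 / real n) * (\<Sum>i<n. deviation f (\<omega> i) * noise (\<omega> i)) \<ge> \<epsilon> / 8"
    by blast
  show "\<omega> \<in> {\<omega>\<in>space (P n). 2 * real n * noise_var k \<alpha> \<mu> K \<le> (\<Sum>i<n. (noise (\<omega> i))^2)}
      \<union> (\<Union>f\<in>F. {\<omega>\<in>space (P n). real n * \<theta> \<le> (\<Sum>i<n. (deviation f (\<omega> i))^2)})"
  proof (cases "2 * real n * noise_var k \<alpha> \<mu> K \<le> (\<Sum>i<n. (noise (\<omega> i))^2)")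
    case False
    have "real n * (\<epsilon> / 8) \<le> (\<Sum>i<n. deviation f (\<omega> i) * noise (\<omega> i))"
      using corr n by (simp add: field_simps)
    then have "real n * (\<epsilon> / 8)^2 / (2 * noise_var k \<alpha> \<mu> K) \<le> (\<Sum>i<n. (deviation f (\<omega> i))^2)"
      by (rule sum_sq_ge_of_correlation) (use False \<epsilon> \<sigma> in auto)
    then show ?thesis
      using \<omega> f by (auto simp: \<theta>_def power2_eq_square)
  qed (use \<omega> in simp)
qed

lemma prob_correlation_large:
  fixes n :: nat
  assumes iso: "\<And>l. l < k \<Longrightarrow> isoperimetric d c (\<mu> l)" and c: "c > 0"
    and \<sigma>: "noise_var k \<alpha> \<mu> K > 0" and L: "L > 0" and \<epsilon>: "\<epsilon> > 0" and F: "finite F"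
    and F_lip: "\<forall>f\<in>F. lipschitz_Rd d L f \<and> (\<forall>x\<in>space (RdM d). \<bar>f x\<bar> \<le> 1)"
    and d: "real d \<ge> 4096 * c * L^2 * noise_var k \<alpha> \<mu> K / \<epsilon>^2"
  defines "R \<equiv> \<epsilon>^2 * real n * real d / (4096 * c * L^2 * noise_var k \<alpha> \<mu> K)"
  shows "measure (P n)
      {\<omega>\<in>space (P n). \<exists>f\<in>F. (1 / real n) * (\<Sum>i<n. deviation f (\<omega> i) * noise (\<omega> i)) \<ge> \<epsilon> / 8}
    \<le> exp (- real n * (noise_var k \<alpha> \<mu> K)^2 / 8) + exp (ln (real (card F)) - R)"
proof (cases "n = 0")
  case False
  then have n: "n > 0" by simp
  define \<sigma>2 where "\<sigma>2 = noise_var k \<alpha> \<mu> K"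
  define \<theta> where "\<theta> = \<epsilon>^2 / (128 * \<sigma>2)"
  define Bs where "Bs = {\<omega>\<in>space (P n). 2 * real n * \<sigma>2 \<le> (\<Sum>i<n. (noise (\<omega> i))^2)}"
  define G where "G f = {\<omega>\<in>space (P n). real n * \<theta> \<le> (\<Sum>i<n. (deviation f (\<omega> i))^2)}" for f
  interpret prob_space "P n" unfolding sample_law_eq using joint_law_prob by (rule prob_space_PiM)
  have d_bound: "4096 * c * L^2 * \<sigma>2 \<le> real d * \<epsilon>^2"
    using d \<epsilon> by (simp add: \<sigma>2_def field_simps)
  moreover have "0 < 4096 * c * L^2 * \<sigma>2" using c L \<sigma> by (simp add: \<sigma>2_def)
  ultimately have "0 < real d * \<epsilon>^2" by linarith
  then have d_pos: "d > 0" by (simp add: zero_less_mult_iff)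
  have d_\<theta>: "32 * c * L^2 \<le> real d * \<theta>"
    using d_bound \<sigma> by (simp add: \<theta>_def \<sigma>2_def field_simps)
  have events: "Bs \<in> sets (P n)" "\<And>f. f \<in> F \<Longrightarrow> G f \<in> sets (P n)"
    using noise_sq_sum_event deviation_sq_sum_event F_lip by (auto simp: Bs_def G_def)
  then have "Bs \<union> (\<Union>f\<in>F. G f) \<in> sets (P n)" using F by auto
  have "measure (P n) {\<omega>\<in>space (P n). \<exists>f\<in>F. (1 / real n) * (\<Sum>i<n. deviation f (\<omega> i) * noise (\<omega> i)) \<ge> \<epsilon> / 8}
      \<le> measure (P n) (Bs \<union> (\<Union>f\<in>F. G f))"
    using correlation_event_subset[OF n \<sigma> \<epsilon>, of F] \<open>Bs \<union> (\<Union>f\<in>F. G f) \<in> sets (P n)\<close>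
    by (intro finite_measure_mono) (simp_all add: Bs_def G_def \<theta>_def \<sigma>2_def)
  also have "\<dots> \<le> measure (P n) Bs + (\<Sum>f\<in>F. measure (P n) (G f))"
    using F events by (intro order_trans[OF measure_Un_le] add_left_mono measure_UNION_le) auto
  also have "\<dots> \<le> exp (- real n * \<sigma>2^2 / 8) + (\<Sum>f\<in>F. exp (- R))"
  proof (intro add_mono sum_mono)
    show "measure (P n) Bs \<le> exp (- real n * \<sigma>2^2 / 8)"
      using prob_noise_sq_sum_large[OF n] by (simp add: Bs_def \<sigma>2_def)
    show "measure (P n) (G f) \<le> exp (- R)" if "f \<in> F" for f
      using prob_deviation_sq_sum_large[OF iso c L d_pos _ _ d_\<theta>, of f n] F_lip that
      by (simp add: G_def R_def \<theta>_def \<sigma>2_def field_simps)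
  qed
  also have "(\<Sum>f\<in>F. exp (- R)) \<le> exp (ln (real (card F)) - R)"
    by (cases "card F = 0") (simp_all add: exp_diff exp_minus field_simps)
  finally show ?thesis by (simp add: \<sigma>2_def)
qed (use \<epsilon> in simp)

end

theorem mainTheorem4:
  shows "\<exists>C1::real. C1 > 0 \<and>
    (\<forall>(d::nat) (k::nat) (\<alpha>::nat \<Rightarrow> real) (\<mu>::nat \<Rightarrow> (nat \<Rightarrow> real) measure) (c::real)
      (K::(nat \<Rightarrow> real) \<Rightarrow> real measure) (n::nat) (L::real) (\<epsilon>::real)
      (F::((nat \<Rightarrow> real) \<Rightarrow> real) set).
      c > 0 \<and> (\<forall>l<k. \<alpha> l \<ge> 0) \<and> (\<Sum>l<k. \<alpha> l) = 1 \<and>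
      (\<forall>l<k. isoperimetric d c (\<mu> l)) \<and>
      K \<in> RdM d \<rightarrow>\<^sub>M prob_algebra borel \<and>
      (\<forall>x\<in>space (RdM d). AE y in K x. \<bar>y\<bar> \<le> 1) \<and>
      noise_var k \<alpha> \<mu> K > 0 \<and> L > 0 \<and> \<epsilon> > 0 \<and>
      finite F \<and> (\<forall>f\<in>F. lipschitz_Rd d L f \<and> (\<forall>x\<in>space (RdM d). \<bar>f x\<bar> \<le> 1)) \<and>
      real d \<ge> C1 * c * L^2 * noise_var k \<alpha> \<mu> K / \<epsilon>^2
      \<longrightarrow>
      measure (sample_law d k \<alpha> \<mu> K n)
        {\<omega> \<in> space (sample_law d k \<alpha> \<mu> K n).
          \<exists>f\<in>F. (1 / real n) * (\<Sum>i<n.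
              (f (fst (snd (\<omega> i))) - integral\<^sup>L (\<mu> (fst (\<omega> i))) f)
              * (snd (snd (\<omega> i)) - cond_mean K (fst (snd (\<omega> i))))) \<ge> \<epsilon> / 8}
      \<le> exp (- real n * (noise_var k \<alpha> \<mu> K)^2 / 8)
        + exp (ln (real (card F)) - \<epsilon>^2 * real n * real d / (C1 * c * L^2 * noise_var k \<alpha> \<mu> K)))"
proof (intro exI[of _ 4096] conjI allI impI, goal_cases)
  case (2 d k \<alpha> \<mu> c K n L \<epsilon> F)
  then have "mixture_model d k \<alpha> \<mu> K"
    unfolding mixture_model_def by (auto simp: isoperimetric_def)
  then interpret mixture_model d k \<alpha> \<mu> K .
  show ?case
    by (rule prob_correlation_large[of c L \<epsilon> F n, unfolded deviation_def noise_def]) (use 2 in auto)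
qed simp

end
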